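(* For every $K>1$ and every $p>q\ge 1$, the space $\ell_p$ admits a $K$-localized weakly bi-Lipschitz embedding into $\ell_q$ with distortion $O_{p/q}(K^{p/q-1})$, where the implied constant depends only on $p/q$.
   Context: Given $K,D>1$, a metric space $(\mathcal{M},d_\mathcal{M})$ admits a $K$-localized weakly bi-Lipschitz embedding into a metric space $(\mathcal{N},d_\mathcal{N})$ with distortion $D$ if for every $\Delta>0$ and every subset $\mathcal{C}\subseteq\mathcal{M}$ with $\operatorname{diam}_\mathcal{M}(\mathcal{C})\le K\Delta$ there is a non-constant Lipschitz function $f:\mathcal{C}\to\mathcal{N}$ such that for all $x,y\in\mathcal{C}$ with $d_\mathcal{M}(x,y)>\Delta$, $d_\mathcal{N}(f(x),f(y))>\frac{\|f\|_{\mathrm{Lip}}}{D}\Delta$, where $\|f\|_{\mathrm{Lip}}$ is the Lipschitz constant of $f$. $\ell_p,\ell_q$ are the sequence spaces with the $\ell_p$, $\ell_q$ norms. *)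

theory Defs
  imports "HOL-Analysis.Analysis"
begin

definition lp_space :: "real \<Rightarrow> (nat \<Rightarrow> real) set" where
  "lp_space p = {x. summable (\<lambda>n. \<bar>x n\<bar> powr p)}"

definition lp_dist :: "real \<Rightarrow> (nat \<Rightarrow> real) \<Rightarrow> (nat \<Rightarrow> real) \<Rightarrow> real" where
  "lp_dist p x y = (\<Sum>n. \<bar>x n - y n\<bar> powr p) powr (1 / p)"

definition lipschitz_wrt ::
  "('a \<Rightarrow> 'a \<Rightarrow> real) \<Rightarrow> ('b \<Rightarrow> 'b \<Rightarrow> real) \<Rightarrow> 'a set \<Rightarrow> ('a \<Rightarrow> 'b) \<Rightarrow> bool" where
  "lipschitz_wrt dM dN C f \<longleftrightarrow> (\<exists>B. \<forall>x\<in>C. \<forall>y\<in>C. dN (f x) (f y) \<le> B * dM x y)"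

definition lip_const ::
  "('a \<Rightarrow> 'a \<Rightarrow> real) \<Rightarrow> ('b \<Rightarrow> 'b \<Rightarrow> real) \<Rightarrow> 'a set \<Rightarrow> ('a \<Rightarrow> 'b) \<Rightarrow> real" where
  "lip_const dM dN C f = Sup {dN (f x) (f y) / dM x y | x y. x \<in> C \<and> y \<in> C \<and> x \<noteq> y}"

text \<open>The diameter bound diam(C) <= K*Delta is written out as a bound on all pairwise distances;
  only subsets with at least two points are considered (a non-constant map needs them).\<close>
definition localized_wbl_embedding ::
  "'a set \<Rightarrow> ('a \<Rightarrow> 'a \<Rightarrow> real) \<Rightarrow> 'b set \<Rightarrow> ('b \<Rightarrow> 'b \<Rightarrow> real) \<Rightarrow> real \<Rightarrow> real \<Rightarrow> bool" where
  "localized_wbl_embedding M dM N dN K D \<longleftrightarrow> 1 < K \<and> 1 < D \<and>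
     (\<forall>\<Delta>>0. \<forall>C. C \<subseteq> M \<and> (\<exists>x\<in>C. \<exists>y\<in>C. x \<noteq> y) \<and>
        (\<forall>x\<in>C. \<forall>y\<in>C. dM x y \<le> K * \<Delta>) \<longrightarrow>
        (\<exists>f. f ` C \<subseteq> N \<and> lipschitz_wrt dM dN C f \<and> (\<exists>x\<in>C. \<exists>y\<in>C. f x \<noteq> f y) \<and>
             (\<forall>x\<in>C. \<forall>y\<in>C. dM x y > \<Delta> \<longrightarrow>
                dN (f x) (f y) > lip_const dM dN C f / D * \<Delta>)))"

end

theory Submission
  imports Defs
begin

text \<open>Translate \<open>C\<close> so that one of its points sits at the origin and rescale it by \<open>s = K\<Delta>\<close>,
  so that it lies in the unit ball of \<open>l_p\<close>. With \<open>r = p/q\<close>, the coordinatewise Mazur map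
  \<open>t \<mapsto> sgn t * \<bar>t\<bar> powr r\<close> sends this ball into \<open>l_q\<close>, is \<open>2r\<close>-Lipschitz there (the pointwise
  mean value bound, summed with Hoelder's inequality) and satisfies the lower bound
  \<open>\<parallel>M u - M v\<parallel>\<^sub>q \<ge> 2 powr (-r) * \<parallel>u - v\<parallel>\<^sub>p powr r\<close>. Points of \<open>C\<close> at distance \<open>> \<Delta>\<close> are at
  distance \<open>> 1/K\<close> after rescaling, so their images are more than \<open>2 powr (-r) * K powr (-r)\<close>
  apart, while the Lipschitz constant of the embedding is at most \<open>2r/s\<close>. Comparing the two gives
  the distortion \<open>2r * 2 powr r * K powr (r - 1)\<close>.\<close>

lemma powr_eq_mult_powr_diff_one:
  "0 \<le> (u::real) \<Longrightarrow> u powr r = u * u powr (r - 1)"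
  by (cases "u = 0") (auto simp: powr_mult_base)

lemma powr_superadditive:
  assumes "0 \<le> (u::real)" "0 \<le> v" "1 \<le> r"
  shows "u powr r + v powr r \<le> (u + v) powr r"
proof -
  have "u powr r + v powr r \<le> u * (u + v) powr (r - 1) + v * (u + v) powr (r - 1)"
    using assms by (intro add_mono; subst powr_eq_mult_powr_diff_one)
      (auto intro!: mult_left_mono powr_mono2)
  also have "\<dots> = (u + v) powr r"
    using assms powr_eq_mult_powr_diff_one[of "u + v" r] by (simp add: algebra_simps)
  finally show ?thesis .
qed

lemma powr_abs_diff_le_abs_diff_powr:
  assumes "0 \<le> (x::real)" "0 \<le> y" "1 \<le> r"
  shows "\<bar>x - y\<bar> powr r \<le> \<bar>x powr r - y powr r\<bar>"
proof -
  have *: "(b - a) powr r \<le> \<bar>b powr r - a powr r\<bar>" if "0 \<le> a" "a \<le> b" for a b :: real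
    using powr_superadditive[of "b - a" a r] that assms by simp
  show ?thesis
    using *[of y x] *[of x y] assms by (cases "y \<le> x") (auto simp: abs_minus_commute)
qed

lemma powr_half_sum_le:
  assumes "0 \<le> (x::real)" "0 \<le> y" "0 \<le> r"
  shows "2 powr (-r) * (x + y) powr r \<le> x powr r + y powr r"
proof -
  have "2 powr (-r) * (x + y) powr r = ((x + y) / 2) powr r"
    using assms by (simp add: powr_divide powr_minus divide_simps)
  also have "\<dots> \<le> max x y powr r" using assms by (intro powr_mono2) auto
  also have "\<dots> \<le> x powr r + y powr r" by (simp add: max_def)
  finally show ?thesis .
qed

text \<open>Young's inequality applied to \<open>y\<close> and \<open>x powr (r - 1)\<close>.\<close>
lemma powr_diff_le_tangent:
  assumes "0 \<le> (y::real)" "y \<le> x" "1 \<le> r"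
  shows "x powr r - y powr r \<le> r * (x - y) * x powr (r - 1)"
proof (cases "y = 0")
  case True
  then show ?thesis
    using assms powr_eq_mult_powr_diff_one[of x r]
      mult_right_mono[of 1 r "x * x powr (r - 1)"] by (simp add: algebra_simps)
next
  case False
  with assms have "0 < y" "0 < x" by auto
  have "r * (1 - 1/r) = r - 1" using assms by (simp add: field_simps)
  then have "y * x powr (r - 1) \<le> 1/r * y powr r + (1 - 1/r) * x powr r"
    using Youngs_inequality_0[of "1/r" "1 - 1/r" "y powr r" "x powr r"] \<open>0 < x\<close> \<open>0 < y\<close> assms
    by (simp add: powr_powr)
  then have "r * (y * x powr (r - 1)) \<le> r * (1/r * y powr r + (1 - 1/r) * x powr r)"
    using assms by (intro mult_left_mono) auto
  then show ?thesis
    using assms powr_eq_mult_powr_diff_one[of x r] by (simp add: algebra_simps)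
qed

lemma abs_diff_powr_le_mean_value:
  assumes "0 \<le> (x::real)" "0 \<le> y" "1 \<le> r"
  shows "\<bar>x powr r - y powr r\<bar> \<le> r * \<bar>x - y\<bar> * max x y powr (r - 1)"
proof -
  have *: "\<bar>b powr r - a powr r\<bar> \<le> r * (b - a) * b powr (r - 1)" if "0 \<le> a" "a \<le> b" for a b :: real
    using powr_diff_le_tangent[OF that assms(3)] powr_mono2[of r a b] that assms by simp
  show ?thesis
    using *[of y x] *[of x y] assms
    by (cases "y \<le> x") (auto simp: abs_minus_commute max_def)
qed

lemma powr_add_le_mean_value:
  assumes "0 \<le> (x::real)" "0 \<le> y" "1 \<le> r"
  shows "x powr r + y powr r \<le> r * (x + y) * max x y powr (r - 1)"
proof -
  have "x powr r + y powr r \<le> x * max x y powr (r - 1) + y * max x y powr (r - 1)"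
    using assms by (intro add_mono; subst powr_eq_mult_powr_diff_one)
      (auto intro!: mult_left_mono powr_mono2)
  also have "\<dots> \<le> r * ((x + y) * max x y powr (r - 1))"
    using assms mult_right_mono[of 1 r "(x + y) * max x y powr (r - 1)"]
    by (simp add: algebra_simps)
  finally show ?thesis by (simp add: algebra_simps)
qed

definition mazur :: "real \<Rightarrow> real \<Rightarrow> real" where
  "mazur r t = sgn t * \<bar>t\<bar> powr r"

lemma abs_mazur: "\<bar>mazur r t\<bar> = \<bar>t\<bar> powr r"
  by (cases "t = 0") (auto simp: mazur_def abs_mult)

lemma mazur_of_nonneg: "0 \<le> t \<Longrightarrow> mazur r t = t powr r"
  by (cases "t = 0") (auto simp: mazur_def)

lemma mazur_of_neg: "t < 0 \<Longrightarrow> mazur r t = - ((- t) powr r)"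
  by (simp add: mazur_def)

text \<open>The equations are oriented towards \<open>\<bar>a - b\<bar>\<close>; the other orientation makes the simplifier loop.\<close>
lemma mazur_diff_cases:
  "(\<bar>\<bar>a\<bar> - \<bar>b\<bar>\<bar> = \<bar>a - b\<bar> \<and> \<bar>mazur r a - mazur r b\<bar> = \<bar>\<bar>a\<bar> powr r - \<bar>b\<bar> powr r\<bar>) \<or>
   (\<bar>a\<bar> + \<bar>b\<bar> = \<bar>a - b\<bar> \<and> \<bar>mazur r a - mazur r b\<bar> = \<bar>a\<bar> powr r + \<bar>b\<bar> powr r)"
proof (cases "0 \<le> a"; cases "0 \<le> b")
  assume "0 \<le> a" "\<not> 0 \<le> b"
  then show ?thesis by (simp add: mazur_of_nonneg mazur_of_neg)
next
  assume "\<not> 0 \<le> a" "0 \<le> b"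
  then have "\<bar>mazur r a - mazur r b\<bar> = \<bar>a\<bar> powr r + \<bar>b\<bar> powr r"
    by (simp add: mazur_of_nonneg mazur_of_neg abs_minus_commute)
  with \<open>\<not> 0 \<le> a\<close> \<open>0 \<le> b\<close> show ?thesis by simp
qed (simp_all add: mazur_of_nonneg mazur_of_neg abs_minus_commute)

lemma mazur_diff_le:
  assumes "1 \<le> r"
  shows "\<bar>mazur r a - mazur r b\<bar> \<le> r * \<bar>a - b\<bar> * max \<bar>a\<bar> \<bar>b\<bar> powr (r - 1)"
  using mazur_diff_cases[of a b r]
proof (elim disjE conjE)
  assume "\<bar>\<bar>a\<bar> - \<bar>b\<bar>\<bar> = \<bar>a - b\<bar>" "\<bar>mazur r a - mazur r b\<bar> = \<bar>\<bar>a\<bar> powr r - \<bar>b\<bar> powr r\<bar>"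
  then show ?thesis
    using abs_diff_powr_le_mean_value[of "\<bar>a\<bar>" "\<bar>b\<bar>" r] assms by simp
next
  assume "\<bar>a\<bar> + \<bar>b\<bar> = \<bar>a - b\<bar>" "\<bar>mazur r a - mazur r b\<bar> = \<bar>a\<bar> powr r + \<bar>b\<bar> powr r"
  then show ?thesis
    using powr_add_le_mean_value[of "\<bar>a\<bar>" "\<bar>b\<bar>" r] assms by simp
qed

lemma mazur_diff_ge:
  assumes "1 \<le> r"
  shows "2 powr (-r) * \<bar>a - b\<bar> powr r \<le> \<bar>mazur r a - mazur r b\<bar>"
  using mazur_diff_cases[of a b r]
proof (elim disjE conjE)
  assume "\<bar>\<bar>a\<bar> - \<bar>b\<bar>\<bar> = \<bar>a - b\<bar>" "\<bar>mazur r a - mazur r b\<bar> = \<bar>\<bar>a\<bar> powr r - \<bar>b\<bar> powr r\<bar>"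
  moreover have "2 powr (-r) \<le> 1"
    using assms powr_mono[of "-r" 0 2] by simp
  ultimately show ?thesis
    using powr_abs_diff_le_abs_diff_powr[of "\<bar>a\<bar>" "\<bar>b\<bar>" r] assms
      mult_right_mono[of "2 powr (-r)" 1 "\<bar>a - b\<bar> powr r"] by simp
next
  assume "\<bar>a\<bar> + \<bar>b\<bar> = \<bar>a - b\<bar>" "\<bar>mazur r a - mazur r b\<bar> = \<bar>a\<bar> powr r + \<bar>b\<bar> powr r"
  then show ?thesis
    using powr_half_sum_le[of "\<bar>a\<bar>" "\<bar>b\<bar>" r] assms by simp
qed

lemma inj_mazur:
  assumes "1 \<le> r"
  shows "inj (mazur r)"
proof (rule injI)
  fix a b assume "mazur r a = mazur r b"
  then have "2 powr (-r) * \<bar>a - b\<bar> powr r \<le> 0"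
    using mazur_diff_ge[OF assms, of a b] by simp
  then show "a = b" by (simp add: mult_le_0_iff)
qed

lemma summable_abs_diff_powr:
  assumes "0 < (p::real)" "summable (\<lambda>i. \<bar>u i\<bar> powr p)" "summable (\<lambda>i. \<bar>v i\<bar> powr p)"
  shows "summable (\<lambda>i. \<bar>u i - v i\<bar> powr p)"
proof (rule summable_comparison_test)
  have "\<bar>a - b\<bar> powr p \<le> 2 powr p * (\<bar>a\<bar> powr p + \<bar>b\<bar> powr p)" for a b :: real
  proof -
    have "\<bar>a - b\<bar> powr p \<le> (2 * max \<bar>a\<bar> \<bar>b\<bar>) powr p"
      using assms by (intro powr_mono2) auto
    also have "\<dots> \<le> 2 powr p * (\<bar>a\<bar> powr p + \<bar>b\<bar> powr p)"
      by (auto simp: powr_mult max_def intro!: mult_left_mono)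
    finally show ?thesis .
  qed
  then show "\<exists>N. \<forall>n\<ge>N. norm (\<bar>u n - v n\<bar> powr p) \<le> 2 powr p * (\<bar>u n\<bar> powr p + \<bar>v n\<bar> powr p)"
    by auto
  show "summable (\<lambda>n. 2 powr p * (\<bar>u n\<bar> powr p + \<bar>v n\<bar> powr p))"
    using assms by (intro summable_mult summable_add)
qed

lemma Holder_inequality_suminf:
  fixes f g :: "nat \<Rightarrow> real"
  assumes exps: "1 < r" "1 < s" "1/r + 1/s = 1"
    and nonneg: "\<And>i. 0 \<le> f i" "\<And>i. 0 \<le> g i"
    and summable: "summable (\<lambda>i. f i powr r)" "summable (\<lambda>i. g i powr s)"
  shows "summable (\<lambda>i. f i * g i)"
    and "(\<Sum>i. f i * g i) \<le> (\<Sum>i. f i powr r) powr (1/r) * (\<Sum>i. g i powr s) powr (1/s)"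
proof -
  define A B where "A = (\<Sum>i. f i powr r)" and "B = (\<Sum>i. g i powr s)"
  have Young: "a * b \<le> a powr r / r + b powr s / s" if "0 \<le> a" "0 \<le> b" for a b
    using Youngs_inequality[OF exps that] .
  show summable_prod: "summable (\<lambda>i. f i * g i)"
  proof (rule summable_comparison_test)
    show "\<exists>N. \<forall>n\<ge>N. norm (f n * g n) \<le> f n powr r / r + g n powr s / s"
      using Young nonneg by auto
    show "summable (\<lambda>n. f n powr r / r + g n powr s / s)"
      using summable by (intro summable_add summable_divide)
  qed
  show "(\<Sum>i. f i * g i) \<le> A powr (1/r) * B powr (1/s)"
  proof (cases "A = 0 \<or> B = 0")
    case True
    then have "(\<forall>i. f i = 0) \<or> (\<forall>i. g i = 0)"
      using suminf_eq_zero_iff[of "\<lambda>i. f i powr r"] suminf_eq_zero_iff[of "\<lambda>i. g i powr s"]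
        summable by (auto simp: A_def B_def)
    then show ?thesis by auto
  next
    case False
    then have "0 < A" "0 < B"
      using summable by (auto simp: A_def B_def less_le intro: suminf_nonneg)
    define a b where "a = A powr (1/r)" and "b = B powr (1/s)"
    have "0 < a" "0 < b" "a powr r = A" "b powr s = B"
      using \<open>0 < A\<close> \<open>0 < B\<close> exps by (auto simp: a_def b_def powr_powr)
    have "(\<Sum>i. f i * g i) / (a * b) = (\<Sum>i. (f i / a) * (g i / b))"
      using summable_prod by (simp add: suminf_divide)
    also have "\<dots> \<le> (\<Sum>i. f i powr r / (r * A) + g i powr s / (s * B))"
    proof (rule suminf_le)
      show "f i / a * (g i / b) \<le> f i powr r / (r * A) + g i powr s / (s * B)" for i
        using Young[of "f i / a" "g i / b"] nonneg \<open>0 < a\<close> \<open>0 < b\<close> \<open>a powr r = A\<close> \<open>b powr s = B\<close>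
        by (simp add: powr_divide mult.commute)
      show "summable (\<lambda>i. f i / a * (g i / b))"
        using summable_prod summable_divide[of _ "a * b"] by simp
      show "summable (\<lambda>i. f i powr r / (r * A) + g i powr s / (s * B))"
        using summable by (intro summable_add summable_divide)
    qed
    also have "\<dots> = 1"
      using summable \<open>0 < A\<close> \<open>0 < B\<close> exps
      by (simp add: suminf_add[symmetric] suminf_divide A_def B_def)
    finally show ?thesis
      using \<open>0 < a\<close> \<open>0 < b\<close> by (simp add: a_def b_def)
  qed
qed

lemma lp_dist_nonneg: "0 \<le> lp_dist p x y"
  by (simp add: lp_dist_def)

lemma lp_dist_powr:
  assumes "0 < p" "summable (\<lambda>i. \<bar>x i - y i\<bar> powr p)"
  shows "lp_dist p x y powr p = (\<Sum>i. \<bar>x i - y i\<bar> powr p)"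
  using assms suminf_nonneg[OF assms(2)] by (simp add: lp_dist_def powr_powr)

lemma lp_dist_rescale:
  assumes "0 < s" "0 < p" "x \<in> lp_space p" "y \<in> lp_space p"
  shows "lp_dist p (\<lambda>i. (x i - z i) / s) (\<lambda>i. (y i - z i) / s) = lp_dist p x y / s"
proof -
  have summable: "summable (\<lambda>i. \<bar>x i - y i\<bar> powr p)"
    using summable_abs_diff_powr assms by (simp add: lp_space_def)
  have "(x i - z i) / s - (y i - z i) / s = (x i - y i) / s" for i
    by (simp add: diff_divide_distrib)
  then have "(\<Sum>i. \<bar>(x i - z i) / s - (y i - z i) / s\<bar> powr p) = (\<Sum>i. \<bar>x i - y i\<bar> powr p) / s powr p"
    using assms summable by (simp add: abs_divide powr_divide suminf_divide)
  then show ?thesis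
    using assms suminf_nonneg[OF summable] by (simp add: lp_dist_def powr_divide powr_powr)
qed

lemma lp_space_rescale:
  assumes "0 < p" "x \<in> lp_space p" "z \<in> lp_space p"
  shows "(\<lambda>i. (x i - z i) / s) \<in> lp_space p"
  using summable_divide[OF summable_abs_diff_powr[of p x z], of "\<bar>s\<bar> powr p"] assms
  by (simp add: lp_space_def abs_divide powr_divide)

lemma mazur_lp_space:
  assumes "0 \<le> r" "p = r * q" "u \<in> lp_space p"
  shows "(\<lambda>i. mazur r (u i)) \<in> lp_space q"
  using assms by (simp add: lp_space_def abs_mazur powr_powr)

lemma lp_dist_mazur_ge:
  assumes "1 \<le> r" "0 < q" "p = r * q" "u \<in> lp_space p" "v \<in> lp_space p"
  shows "2 powr (-r) * lp_dist p u v powr r \<le> lp_dist q (\<lambda>i. mazur r (u i)) (\<lambda>i. mazur r (v i))"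
proof -
  define D where "D = (\<Sum>i. \<bar>u i - v i\<bar> powr p)"
  have "0 < p" using assms by simp
  have summable_D: "summable (\<lambda>i. \<bar>u i - v i\<bar> powr p)"
    using summable_abs_diff_powr \<open>0 < p\<close> assms by (simp add: lp_space_def)
  have summable_M: "summable (\<lambda>i. \<bar>mazur r (u i) - mazur r (v i)\<bar> powr q)"
    using summable_abs_diff_powr mazur_lp_space assms by (simp add: lp_space_def)
  have "2 powr (-r * q) * \<bar>u i - v i\<bar> powr p \<le> \<bar>mazur r (u i) - mazur r (v i)\<bar> powr q" for i
  proof -
    have "(2 powr (-r) * \<bar>u i - v i\<bar> powr r) powr q \<le> \<bar>mazur r (u i) - mazur r (v i)\<bar> powr q"
      using mazur_diff_ge assms by (intro powr_mono2) auto
    then show ?thesis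
      using assms by (simp add: powr_mult powr_powr)
  qed
  then have "2 powr (-r * q) * D \<le> (\<Sum>i. \<bar>mazur r (u i) - mazur r (v i)\<bar> powr q)"
    using suminf_le[OF _ summable_mult[OF summable_D] summable_M] suminf_mult[OF summable_D]
    by (simp add: D_def)
  then have "(2 powr (-r * q) * D) powr (1/q) \<le> lp_dist q (\<lambda>i. mazur r (u i)) (\<lambda>i. mazur r (v i))"
    using assms suminf_nonneg[OF summable_D] by (simp add: lp_dist_def D_def powr_mono2)
  moreover have "(2 powr (-r * q) * D) powr (1/q) = 2 powr (-r) * lp_dist p u v powr r"
    using assms suminf_nonneg[OF summable_D] by (simp add: lp_dist_def D_def powr_mult powr_powr)
  ultimately show ?thesis by simp
qed

lemma suminf_max_abs_powr_le:
  fixes u v :: "nat \<Rightarrow> real"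
  assumes "summable (\<lambda>i. \<bar>u i\<bar> powr p)" "summable (\<lambda>i. \<bar>v i\<bar> powr p)"
  shows "summable (\<lambda>i. max \<bar>u i\<bar> \<bar>v i\<bar> powr p)"
    and "(\<Sum>i. max \<bar>u i\<bar> \<bar>v i\<bar> powr p) \<le> (\<Sum>i. \<bar>u i\<bar> powr p) + (\<Sum>i. \<bar>v i\<bar> powr p)"
proof -
  have max_le: "max \<bar>u i\<bar> \<bar>v i\<bar> powr p \<le> \<bar>u i\<bar> powr p + \<bar>v i\<bar> powr p" for i
    by (auto simp: max_def)
  have summable_sum: "summable (\<lambda>i. \<bar>u i\<bar> powr p + \<bar>v i\<bar> powr p)"
    using assms by (rule summable_add)
  show summable_max: "summable (\<lambda>i. max \<bar>u i\<bar> \<bar>v i\<bar> powr p)"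
    using max_le by (intro summable_comparison_test[OF _ summable_sum]) simp
  have "(\<Sum>i. max \<bar>u i\<bar> \<bar>v i\<bar> powr p) \<le> (\<Sum>i. \<bar>u i\<bar> powr p + \<bar>v i\<bar> powr p)"
    using max_le summable_max summable_sum by (rule suminf_le)
  also have "\<dots> = (\<Sum>i. \<bar>u i\<bar> powr p) + (\<Sum>i. \<bar>v i\<bar> powr p)"
    using assms by (rule suminf_add[symmetric])
  finally show "(\<Sum>i. max \<bar>u i\<bar> \<bar>v i\<bar> powr p) \<le> (\<Sum>i. \<bar>u i\<bar> powr p) + (\<Sum>i. \<bar>v i\<bar> powr p)" .
qed

text \<open>The pointwise mean value bound, summed with Hoelder's inequality for the exponents \<open>r\<close>
  and \<open>r/(r - 1)\<close>.\<close>
lemma suminf_abs_mazur_diff_powr_le: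
  assumes "1 < r" "0 < q" "p = r * q" "u \<in> lp_space p" "v \<in> lp_space p"
  shows "(\<Sum>i. \<bar>mazur r (u i) - mazur r (v i)\<bar> powr q)
    \<le> r powr q * ((\<Sum>i. \<bar>u i - v i\<bar> powr p) powr (1/r) * (\<Sum>i. max \<bar>u i\<bar> \<bar>v i\<bar> powr p) powr ((r - 1) / r))"
proof -
  define d m where "d i = \<bar>u i - v i\<bar>" and "m i = max \<bar>u i\<bar> \<bar>v i\<bar>" for i
  define s where "s = r / (r - 1)"
  have "0 < p" "1 < s" "1/r + 1/s = 1" using assms by (auto simp: s_def field_simps)
  have summable_d: "summable (\<lambda>i. d i powr p)"
    using summable_abs_diff_powr \<open>0 < p\<close> assms by (simp add: lp_space_def d_def)
  have summable_m: "summable (\<lambda>i. m i powr p)"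
    using suminf_max_abs_powr_le(1) assms by (simp add: lp_space_def m_def)
  have d_powr: "(d i powr q) powr r = d i powr p" and m_powr: "(m i powr ((r - 1) * q)) powr s = m i powr p" for i
    using assms by (auto simp: powr_powr s_def mult.commute)
  have holder: "summable (\<lambda>i. d i powr q * m i powr ((r - 1) * q))"
    "(\<Sum>i. d i powr q * m i powr ((r - 1) * q)) \<le> (\<Sum>i. d i powr p) powr (1/r) * (\<Sum>i. m i powr p) powr (1/s)"
    using Holder_inequality_suminf[OF \<open>1 < r\<close> \<open>1 < s\<close> \<open>1/r + 1/s = 1\<close>, of "\<lambda>i. d i powr q" "\<lambda>i. m i powr ((r - 1) * q)"]
      summable_d summable_m by (simp_all add: d_powr m_powr)
  have summable_M: "summable (\<lambda>i. \<bar>mazur r (u i) - mazur r (v i)\<bar> powr q)"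
    using summable_abs_diff_powr mazur_lp_space assms by (simp add: lp_space_def)
  have "\<bar>mazur r (u i) - mazur r (v i)\<bar> powr q \<le> r powr q * (d i powr q * m i powr ((r - 1) * q))" for i
  proof -
    have "\<bar>mazur r (u i) - mazur r (v i)\<bar> powr q \<le> (r * d i * m i powr (r - 1)) powr q"
      using mazur_diff_le[of r "u i" "v i"] assms by (intro powr_mono2) (auto simp: d_def m_def)
    also have "\<dots> = r powr q * (d i powr q * m i powr ((r - 1) * q))"
      using assms by (simp add: d_def m_def powr_mult powr_powr mult.commute)
    finally show ?thesis .
  qed
  then have "(\<Sum>i. \<bar>mazur r (u i) - mazur r (v i)\<bar> powr q)
      \<le> (\<Sum>i. r powr q * (d i powr q * m i powr ((r - 1) * q)))"
    using summable_M summable_mult[OF holder(1)] by (rule suminf_le)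
  also have "\<dots> = r powr q * (\<Sum>i. d i powr q * m i powr ((r - 1) * q))"
    using holder(1) by (rule suminf_mult)
  also have "\<dots> \<le> r powr q * ((\<Sum>i. d i powr p) powr (1/r) * (\<Sum>i. m i powr p) powr (1/s))"
    using holder(2) by (intro mult_left_mono) auto
  finally show ?thesis
    using assms by (simp add: d_def m_def s_def)
qed

lemma lp_dist_mazur_le:
  assumes "1 < r" "1 \<le> q" "p = r * q" "u \<in> lp_space p" "v \<in> lp_space p"
    and "(\<Sum>i. \<bar>u i\<bar> powr p) \<le> 1" "(\<Sum>i. \<bar>v i\<bar> powr p) \<le> 1"
  shows "lp_dist q (\<lambda>i. mazur r (u i)) (\<lambda>i. mazur r (v i)) \<le> 2 * r * lp_dist p u v"
proof -
  define A where "A = (\<Sum>i. \<bar>u i - v i\<bar> powr p)"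
  have "0 < q" "0 < p" using assms by auto
  have "0 \<le> A"
    using summable_abs_diff_powr[of p u v] \<open>0 < p\<close> assms
    unfolding A_def lp_space_def by (intro suminf_nonneg) auto
  have summable_M: "summable (\<lambda>i. \<bar>mazur r (u i) - mazur r (v i)\<bar> powr q)"
    using summable_abs_diff_powr mazur_lp_space assms \<open>0 < q\<close> by (simp add: lp_space_def)
  have summable_max: "summable (\<lambda>i. max \<bar>u i\<bar> \<bar>v i\<bar> powr p)"
    using suminf_max_abs_powr_le(1)[of u p v] assms by (simp add: lp_space_def)
  have "(\<Sum>i. max \<bar>u i\<bar> \<bar>v i\<bar> powr p) \<le> 2"
    using suminf_max_abs_powr_le(2)[of u p v] assms by (simp add: lp_space_def)
  then have "(\<Sum>i. max \<bar>u i\<bar> \<bar>v i\<bar> powr p) powr ((r - 1) / r) \<le> 2 powr ((r - 1) / r)"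
    using suminf_nonneg[OF summable_max] assms by (intro powr_mono2) auto
  also have "\<dots> \<le> 2 powr 1"
    using assms by (intro powr_mono) auto
  finally have "r powr q * (A powr (1/r) * (\<Sum>i. max \<bar>u i\<bar> \<bar>v i\<bar> powr p) powr ((r - 1) / r))
      \<le> r powr q * (A powr (1/r) * 2)"
    by (intro mult_left_mono) auto
  then have "(\<Sum>i. \<bar>mazur r (u i) - mazur r (v i)\<bar> powr q) \<le> r powr q * (A powr (1/r) * 2)"
    using suminf_abs_mazur_diff_powr_le[OF \<open>1 < r\<close> \<open>0 < q\<close> assms(3-5)] unfolding A_def
    by linarith
  then have "lp_dist q (\<lambda>i. mazur r (u i)) (\<lambda>i. mazur r (v i)) \<le> (r powr q * (A powr (1/r) * 2)) powr (1/q)"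
    using \<open>0 < q\<close> suminf_nonneg[OF summable_M] by (simp add: lp_dist_def powr_mono2)
  also have "\<dots> = r * A powr (1/p) * 2 powr (1/q)"
    using assms \<open>0 \<le> A\<close> by (simp add: powr_mult powr_powr)
  also have "\<dots> \<le> r * A powr (1/p) * 2"
    using assms powr_mono[of "1/q" 1 2] by (intro mult_left_mono) auto
  also have "A powr (1/p) = lp_dist p u v"
    by (simp add: A_def lp_dist_def)
  finally show ?thesis by simp
qed

definition rescaled_mazur :: "real \<Rightarrow> (nat \<Rightarrow> real) \<Rightarrow> real \<Rightarrow> (nat \<Rightarrow> real) \<Rightarrow> nat \<Rightarrow> real" where
  "rescaled_mazur r x0 s x = (\<lambda>i. mazur r ((x i - x0 i) / s))"

lemma rescaled_mazur_lp_space: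
  assumes "1 \<le> r" "0 < q" "p = r * q" "x \<in> lp_space p" "x0 \<in> lp_space p"
  shows "rescaled_mazur r x0 s x \<in> lp_space q"
  using assms lp_space_rescale[of p x x0 s] mazur_lp_space[of r p q]
  by (simp add: rescaled_mazur_def)

lemma inj_rescaled_mazur:
  assumes "1 \<le> r" "s \<noteq> 0"
  shows "inj (rescaled_mazur r x0 s)"
proof (rule injI)
  fix x y assume "rescaled_mazur r x0 s x = rescaled_mazur r x0 s y"
  then have "(x i - x0 i) / s = (y i - x0 i) / s" for i
    using injD[OF inj_mazur[OF assms(1)]] by (metis rescaled_mazur_def)
  then show "x = y"
    using assms(2) by (auto simp: divide_cancel_right)
qed

lemma suminf_rescale_le_one:
  assumes "0 < s" "0 < p" "x \<in> lp_space p" "x0 \<in> lp_space p" "lp_dist p x x0 \<le> s"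
  shows "(\<Sum>i. \<bar>(x i - x0 i) / s\<bar> powr p) \<le> 1"
proof -
  have summable: "summable (\<lambda>i. \<bar>x i - x0 i\<bar> powr p)"
    using summable_abs_diff_powr assms by (simp add: lp_space_def)
  then have "(\<Sum>i. \<bar>(x i - x0 i) / s\<bar> powr p) = lp_dist p x x0 powr p / s powr p"
    using assms by (simp add: abs_divide powr_divide suminf_divide lp_dist_powr)
  also have "\<dots> \<le> 1"
    using assms lp_dist_nonneg[of p x x0] by (simp add: powr_mono2)
  finally show ?thesis .
qed

lemma lp_dist_rescaled_mazur_le:
  assumes "1 < r" "1 \<le> q" "p = r * q" "0 < s"
    and "x \<in> lp_space p" "y \<in> lp_space p" "x0 \<in> lp_space p"
    and "lp_dist p x x0 \<le> s" "lp_dist p y x0 \<le> s"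
  shows "lp_dist q (rescaled_mazur r x0 s x) (rescaled_mazur r x0 s y) \<le> 2 * r / s * lp_dist p x y"
proof -
  have "0 < p" using assms by simp
  then show ?thesis
    using lp_dist_mazur_le[OF assms(1-3) lp_space_rescale[of p x x0 s] lp_space_rescale[of p y x0 s]
        suminf_rescale_le_one[of s p x x0] suminf_rescale_le_one[of s p y x0]] lp_dist_rescale[of s p x y x0] assms
    by (simp add: rescaled_mazur_def)
qed

lemma lp_dist_rescaled_mazur_ge:
  assumes "1 \<le> r" "0 < q" "p = r * q" "0 < s"
    and "x \<in> lp_space p" "y \<in> lp_space p" "x0 \<in> lp_space p"
  shows "2 powr (-r) * (lp_dist p x y / s) powr r \<le> lp_dist q (rescaled_mazur r x0 s x) (rescaled_mazur r x0 s y)"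
proof -
  have "0 < p" using assms by simp
  then show ?thesis
    using lp_dist_mazur_ge[OF assms(1-3) lp_space_rescale[of p x x0 s] lp_space_rescale[of p y x0 s]] lp_dist_rescale[of s p x y x0] assms
    by (simp add: rescaled_mazur_def)
qed

lemma lip_const_le:
  assumes "\<exists>x\<in>C. \<exists>y\<in>C. x \<noteq> y" "0 \<le> L"
    and "\<And>x y. x \<in> C \<Longrightarrow> y \<in> C \<Longrightarrow> 0 \<le> dM x y"
    and "\<And>x y. x \<in> C \<Longrightarrow> y \<in> C \<Longrightarrow> dN (f x) (f y) \<le> L * dM x y"
  shows "lip_const dM dN C f \<le> L"
  unfolding lip_const_def
proof (rule cSup_least)
  show "{dN (f x) (f y) / dM x y |x y. x \<in> C \<and> y \<in> C \<and> x \<noteq> y} \<noteq> {}"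
    using assms(1) by blast
next
  fix z assume "z \<in> {dN (f x) (f y) / dM x y |x y. x \<in> C \<and> y \<in> C \<and> x \<noteq> y}"
  then obtain x y where xy: "x \<in> C" "y \<in> C" and z: "z = dN (f x) (f y) / dM x y" by blast
  show "z \<le> L"
  proof (cases "dM x y = 0")
    case True
    then show ?thesis using z assms(2) by simp
  next
    case False
    then have "0 < dM x y" using assms(3)[OF xy] by linarith
    then show ?thesis using z assms(4)[OF xy] by (simp add: pos_divide_le_eq)
  qed
qed

lemma localized_wbl_embeddingI:
  assumes "1 < K" "1 < D" "\<And>x y. x \<in> M \<Longrightarrow> y \<in> M \<Longrightarrow> 0 \<le> dM x y"
    and "\<And>\<Delta> C x0 y0. 0 < \<Delta> \<Longrightarrow> C \<subseteq> M \<Longrightarrow> x0 \<in> C \<Longrightarrow> y0 \<in> C \<Longrightarrow> x0 \<noteq> y0 \<Longrightarrow>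
      (\<forall>x\<in>C. \<forall>y\<in>C. dM x y \<le> K * \<Delta>) \<Longrightarrow>
      \<exists>f L. f ` C \<subseteq> N \<and> 0 \<le> L \<and> (\<exists>x\<in>C. \<exists>y\<in>C. f x \<noteq> f y) \<and>
        (\<forall>x\<in>C. \<forall>y\<in>C. dN (f x) (f y) \<le> L * dM x y) \<and>
        (\<forall>x\<in>C. \<forall>y\<in>C. \<Delta> < dM x y \<longrightarrow> L / D * \<Delta> < dN (f x) (f y))"
  shows "localized_wbl_embedding M dM N dN K D"
  unfolding localized_wbl_embedding_def
proof (intro conjI allI impI)
  fix \<Delta> :: real and C
  assume "0 < \<Delta>" and C: "C \<subseteq> M \<and> (\<exists>x\<in>C. \<exists>y\<in>C. x \<noteq> y) \<and> (\<forall>x\<in>C. \<forall>y\<in>C. dM x y \<le> K * \<Delta>)"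
  then obtain x0 y0 where "x0 \<in> C" "y0 \<in> C" "x0 \<noteq> y0" by blast
  obtain f L where f: "f ` C \<subseteq> N" "0 \<le> L" "\<exists>x\<in>C. \<exists>y\<in>C. f x \<noteq> f y"
    and upper: "\<forall>x\<in>C. \<forall>y\<in>C. dN (f x) (f y) \<le> L * dM x y"
    and separated: "\<forall>x\<in>C. \<forall>y\<in>C. \<Delta> < dM x y \<longrightarrow> L / D * \<Delta> < dN (f x) (f y)"
    using assms(4)[OF \<open>0 < \<Delta>\<close> _ \<open>x0 \<in> C\<close> \<open>y0 \<in> C\<close> \<open>x0 \<noteq> y0\<close>] C by blast
  have "lip_const dM dN C f \<le> L"
    using C f upper assms(3) by (intro lip_const_le) (auto simp: subset_iff)
  then have "lip_const dM dN C f / D * \<Delta> \<le> L / D * \<Delta>"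
    using assms(2) \<open>0 < \<Delta>\<close> by (intro mult_right_mono divide_right_mono) auto
  with separated have "\<forall>x\<in>C. \<forall>y\<in>C. \<Delta> < dM x y \<longrightarrow> lip_const dM dN C f / D * \<Delta> < dN (f x) (f y)"
    by fastforce
  moreover have "lipschitz_wrt dM dN C f"
    unfolding lipschitz_wrt_def using upper by blast
  ultimately show "\<exists>f. f ` C \<subseteq> N \<and> lipschitz_wrt dM dN C f \<and> (\<exists>x\<in>C. \<exists>y\<in>C. f x \<noteq> f y) \<and>
      (\<forall>x\<in>C. \<forall>y\<in>C. \<Delta> < dM x y \<longrightarrow> lip_const dM dN C f / D * \<Delta> < dN (f x) (f y))"
    using f by blast
qed (fact assms)+

lemma lp_localized_wbl_embedding:
  fixes K p q D :: real
  assumes "1 < K" "1 \<le> q" "q < p" "1 < D"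
    and D_large: "2 * (p/q) * 2 powr (p/q) * K powr (p/q - 1) \<le> D"
  shows "localized_wbl_embedding (lp_space p) (lp_dist p) (lp_space q) (lp_dist q) K D"
proof -
  define r where "r = p / q"
  have "0 < q" "1 < r" "p = r * q" "0 < p"
    using assms by (auto simp: r_def)
  have separation: "2 * r / (K * D) \<le> 2 powr (-r) * (1 / K) powr r"
  proof -
    have "2 * r * 2 powr r * K powr r = K * (2 * r * 2 powr r * K powr (r - 1))"
      using powr_eq_mult_powr_diff_one[of K r] assms by simp
    also have "\<dots> \<le> K * D"
      using D_large assms by (intro mult_left_mono) (auto simp: r_def)
    finally show ?thesis
      using assms \<open>1 < r\<close>
      by (simp add: powr_minus powr_divide divide_simps mult.commute mult.left_commute)
  qed
  show ?thesis
  proof (rule localized_wbl_embeddingI[OF assms(1,4) lp_dist_nonneg])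
    fix \<Delta> :: real and C x0 y0
    assume "0 < \<Delta>" "C \<subseteq> lp_space p" "x0 \<in> C" "y0 \<in> C" "x0 \<noteq> y0"
      and bounded: "\<forall>x\<in>C. \<forall>y\<in>C. lp_dist p x y \<le> K * \<Delta>"
    define s where "s = K * \<Delta>"
    define f where "f = rescaled_mazur r x0 s"
    have "0 < s" using assms \<open>0 < \<Delta>\<close> by (simp add: s_def)
    have in_lp: "x \<in> lp_space p" if "x \<in> C" for x
      using that \<open>C \<subseteq> lp_space p\<close> by blast
    have x0_close: "lp_dist p x x0 \<le> s" if "x \<in> C" for x
      using bounded that \<open>x0 \<in> C\<close> by (simp add: s_def)
    show "\<exists>f L. f ` C \<subseteq> lp_space q \<and> 0 \<le> L \<and> (\<exists>x\<in>C. \<exists>y\<in>C. f x \<noteq> f y) \<and>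
        (\<forall>x\<in>C. \<forall>y\<in>C. lp_dist q (f x) (f y) \<le> L * lp_dist p x y) \<and>
        (\<forall>x\<in>C. \<forall>y\<in>C. \<Delta> < lp_dist p x y \<longrightarrow> L / D * \<Delta> < lp_dist q (f x) (f y))"
    proof (intro exI[of _ f] exI[of _ "2 * r / s"] conjI ballI impI)
      show "f ` C \<subseteq> lp_space q"
        unfolding f_def using \<open>1 < r\<close> \<open>0 < q\<close> \<open>p = r * q\<close> in_lp \<open>x0 \<in> C\<close>
        by (auto intro: rescaled_mazur_lp_space)
      show "0 \<le> 2 * r / s" using \<open>1 < r\<close> \<open>0 < s\<close> by simp
      show "\<exists>x\<in>C. \<exists>y\<in>C. f x \<noteq> f y"
        using inj_rescaled_mazur[of r s x0] \<open>1 < r\<close> \<open>0 < s\<close> \<open>x0 \<in> C\<close> \<open>y0 \<in> C\<close> \<open>x0 \<noteq> y0\<close>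
        by (auto simp: f_def dest: injD)
      show "lp_dist q (f x) (f y) \<le> 2 * r / s * lp_dist p x y" if "x \<in> C" "y \<in> C" for x y
        unfolding f_def using \<open>1 < r\<close> \<open>1 \<le> q\<close> \<open>p = r * q\<close> \<open>0 < s\<close> in_lp x0_close that \<open>x0 \<in> C\<close>
        by (intro lp_dist_rescaled_mazur_le) auto
    next
      fix x y assume "x \<in> C" "y \<in> C" "\<Delta> < lp_dist p x y"
      have "2 * r / s / D * \<Delta> = 2 * r / (K * D)"
        using \<open>0 < \<Delta>\<close> by (simp add: s_def)
      also have "\<dots> \<le> 2 powr (-r) * (\<Delta> / s) powr r"
        using separation \<open>0 < \<Delta>\<close> by (simp add: s_def)
      also have "\<dots> < 2 powr (-r) * (lp_dist p x y / s) powr r"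
        using \<open>\<Delta> < lp_dist p x y\<close> \<open>0 < \<Delta>\<close> \<open>0 < s\<close> \<open>1 < r\<close>
        by (intro mult_strict_left_mono powr_less_mono2 divide_strict_right_mono) auto
      also have "\<dots> \<le> lp_dist q (f x) (f y)"
        unfolding f_def using \<open>1 < r\<close> \<open>0 < q\<close> \<open>p = r * q\<close> \<open>0 < s\<close> in_lp \<open>x \<in> C\<close> \<open>y \<in> C\<close> \<open>x0 \<in> C\<close>
        by (intro lp_dist_rescaled_mazur_ge) auto
      finally show "2 * r / s / D * \<Delta> < lp_dist q (f x) (f y)" .
    qed
  qed
qed

theorem lemma18:
  shows "\<exists>c :: real \<Rightarrow> real. \<forall>K p q :: real. 1 < K \<and> 1 \<le> q \<and> q < p \<longrightarrow>
           localized_wbl_embedding (lp_space p) (lp_dist p) (lp_space q) (lp_dist q)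
             K (c (p / q) * K powr (p / q - 1))"
proof (intro exI[of _ "\<lambda>t. 2 * t * 2 powr t + 1"] allI impI)
  fix K p q :: real
  assume assms: "1 < K \<and> 1 \<le> q \<and> q < p"
  define r where "r = p / q"
  define c where "c = 2 * r * 2 powr r"
  have "0 < c" using assms by (simp add: c_def r_def)
  have "1 \<le> K powr (r - 1)"
    using assms by (intro ge_one_powr_ge_zero) (auto simp: r_def)
  moreover have "0 < c * K powr (r - 1)" using \<open>0 < c\<close> assms by simp
  ultimately have "1 < (c + 1) * K powr (r - 1)" and "c * K powr (r - 1) \<le> (c + 1) * K powr (r - 1)"
    by (auto simp: distrib_right)
  then show "localized_wbl_embedding (lp_space p) (lp_dist p) (lp_space q) (lp_dist q)
      K ((2 * (p / q) * 2 powr (p / q) + 1) * K powr (p / q - 1))"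
    using assms by (intro lp_localized_wbl_embedding) (auto simp: c_def r_def)
qed

end
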